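(* Let $K\subseteq\mathbb{R}^d$ be a convex body, $\Lambda\subseteq\mathbb{R}^d$ a lattice with basis $\{f_1,\dots,f_d\}$, and $i\in\{1,\dots,d\}$. For each $i$-element subset $I\subseteq\{1,\dots,d\}$ let $L_I=\operatorname{span}_{\mathbb{R}}\{f_k: k\in I\}$. If $\dim(K\cap L_I)=i$ for every $i$-element subset $I$, then $$\mu_i(K,\Lambda)\leqslant\max\Big\{\mu(K\cap L_I,\Lambda\cap L_I): I\subseteq\{1,\dots,d\},\ |I|=i\Big\}.$$
   Context: A convex body is a full-dimensional compact convex set; a lattice is a full-rank discrete subgroup. For a convex body $K\subseteq\mathbb{R}^d$ and $i\in\{1,\dots,d\}$, $\mu_i(K,\Lambda)=\min\{\mu\ge0: (\mu K+\Lambda)\cap U\ne\emptyset$ for every $(d-i)$-dimensional affine subspace $U\subseteq\mathbb{R}^d\}$. For a $k$-dimensional real vector space $E$, a lattice $\Gamma\subseteq E$ and a convex body $C\subseteq E$, the covering radius is $\mu(C,\Gamma)=\min\{\mu\ge0:\mu C+\Gamma=E\}$; here $\mu(K\cap L_I,\Lambda\cap L_I)$ is computed inside $L_I$. *)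

theory Defs
  imports "HOL-Analysis.Analysis"
begin

definition convex_body :: "'a::euclidean_space set \<Rightarrow> bool" where
  "convex_body K \<longleftrightarrow> compact K \<and> convex K \<and> interior K \<noteq> {}"

definition lattice_of :: "(nat \<Rightarrow> 'a::euclidean_space) \<Rightarrow> nat \<Rightarrow> 'a set" where
  "lattice_of f d = {(\<Sum>k\<in>{1..d}. of_int (z k) *\<^sub>R f k) | z. True}"

definition dilate_plus :: "real \<Rightarrow> 'a::real_vector set \<Rightarrow> 'a set \<Rightarrow> 'a set" where
  "dilate_plus \<mu> C G = {\<mu> *\<^sub>R x + g | x g. x \<in> C \<and> g \<in> G}"

definition covering_minimum :: "nat \<Rightarrow> 'a::euclidean_space set \<Rightarrow> 'a set \<Rightarrow> real" where
  "covering_minimum i K L = Inf {\<mu>. \<mu> \<ge> 0 \<and>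
     (\<forall>U. affine U \<and> U \<noteq> {} \<and> aff_dim U = int (DIM('a) - i) \<longrightarrow>
          dilate_plus \<mu> K L \<inter> U \<noteq> {})}"

definition covering_radius_in :: "'a::euclidean_space set \<Rightarrow> 'a set \<Rightarrow> 'a set \<Rightarrow> real" where
  "covering_radius_in E C G = Inf {\<mu>. \<mu> \<ge> 0 \<and> dilate_plus \<mu> C G = E}"

end

theory Submission
  imports Defs
begin

(* Every (d - i)-dimensional affine subspace U meets some coordinate subspace L_I with |I| = i,
   because the basis vectors f_k that complete a basis of the direction of U span a complement
   of that direction. If mu exceeds the covering radius of K \<inter> L_I in L_I, the common point
   lies in mu (K \<inter> L_I) + (Lambda \<inter> L_I), a subset of mu K + Lambda. The dimension hypothesis
   makes K \<inter> L_I full-dimensional in L_I, so some dilate of it does cover L_I and its covering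
   radius is the infimum of a nonempty, upward closed set. *)

lemma dilate_plus_mono:
  assumes "C \<subseteq> C'" and "G \<subseteq> G'"
  shows "dilate_plus \<mu> C G \<subseteq> dilate_plus \<mu> C' G'"
  using assms unfolding dilate_plus_def by blast

lemma dilate_plus_covers_upward:
  fixes E :: "'a::real_vector set"
  assumes "subspace E" and "C \<subseteq> E" and "convex C" and "C \<noteq> {}"
    and "0 \<le> \<mu>" and "\<mu> \<le> \<mu>'" and cov: "dilate_plus \<mu> C G = E"
  shows "E \<subseteq> dilate_plus \<mu>' C G"
proof (cases "\<mu> = \<mu>'")
  case True
  then show ?thesis using cov by simp
next
  case False
  then have "0 < \<mu>'" using assms(5,6) by linarith
  show ?thesis
  proof
    fix p assume "p \<in> E"
    obtain c where c: "c \<in> C" using \<open>C \<noteq> {}\<close> by auto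
    define t where "t = \<mu>' - \<mu>"
    have "p - t *\<^sub>R c \<in> E"
      using \<open>p \<in> E\<close> c assms(1,2) by (auto intro: subspace_diff subspace_scale)
    then obtain x g where xg: "p - t *\<^sub>R c = \<mu> *\<^sub>R x + g" "x \<in> C" "g \<in> G"
      using cov unfolding dilate_plus_def by blast
    define y where "y = (\<mu> / \<mu>') *\<^sub>R x + (t / \<mu>') *\<^sub>R c"
    have "y \<in> C"
      unfolding y_def using \<open>0 < \<mu>'\<close> assms(5,6)
      by (intro convexD[OF \<open>convex C\<close> xg(2) c]) (auto simp: t_def diff_divide_distrib)
    moreover have "\<mu>' *\<^sub>R y = \<mu> *\<^sub>R x + t *\<^sub>R c"
      using \<open>0 < \<mu>'\<close> by (simp add: y_def scaleR_add_right)
    then have "p = \<mu>' *\<^sub>R y + g"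
      using xg(1) by (simp add: algebra_simps)
    ultimately show "p \<in> dilate_plus \<mu>' C G"
      using xg(3) unfolding dilate_plus_def by blast
  qed
qed

lemma covering_radius_in_nonneg:
  assumes "\<exists>\<mu>\<ge>0. dilate_plus \<mu> C G = E"
  shows "0 \<le> covering_radius_in E C G"
  unfolding covering_radius_in_def using assms by (intro cInf_greatest) auto

lemma subset_dilate_plus_above_covering_radius_in:
  fixes E :: "'a::euclidean_space set"
  assumes "subspace E" and "C \<subseteq> E" and "convex C" and "C \<noteq> {}"
    and "\<exists>\<mu>\<ge>0. dilate_plus \<mu> C G = E"
    and "covering_radius_in E C G < \<mu>'"
  shows "E \<subseteq> dilate_plus \<mu>' C G"
proof -
  obtain \<mu> where "0 \<le> \<mu>" "dilate_plus \<mu> C G = E" "\<mu> < \<mu>'"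
    using cInf_lessD[of "{\<mu>. 0 \<le> \<mu> \<and> dilate_plus \<mu> C G = E}" \<mu>'] assms(5,6)
    unfolding covering_radius_in_def by auto
  then show ?thesis
    using dilate_plus_covers_upward[OF assms(1-4)] by simp
qed

lemma span_eq_bounded_plus_int_combination:
  fixes B :: "'a::real_normed_vector set"
  assumes "finite B" and "p \<in> span B"
  obtains y and z :: "'a \<Rightarrow> int"
  where "p = y + (\<Sum>b\<in>B. of_int (z b) *\<^sub>R b)" and "y \<in> span B"
    and "norm y \<le> (\<Sum>b\<in>B. norm b)"
proof -
  obtain u where u: "p = (\<Sum>b\<in>B. u b *\<^sub>R b)"
    using assms span_finite[of B] by auto
  define y where "y = (\<Sum>b\<in>B. frac (u b) *\<^sub>R b)"
  have "p = y + (\<Sum>b\<in>B. of_int \<lfloor>u b\<rfloor> *\<^sub>R b)"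
    unfolding u y_def frac_def by (simp add: scaleR_diff_left sum_subtractf)
  moreover have "y \<in> span B"
    unfolding y_def by (intro span_sum span_scale span_base)
  moreover have "norm y \<le> (\<Sum>b\<in>B. norm b)"
  proof -
    have "norm y \<le> (\<Sum>b\<in>B. \<bar>frac (u b)\<bar> * norm b)"
      unfolding y_def by (rule order_trans[OF norm_sum]) simp
    also have "\<dots> \<le> (\<Sum>b\<in>B. norm b)"
      by (intro sum_mono mult_left_le_one_le) (simp_all add: frac_lt_1 less_imp_le)
    finally show ?thesis .
  qed
  ultimately show thesis by (rule that)
qed

lemma exists_dilate_plus_covering_span:
  fixes C :: "'a::euclidean_space set"
  assumes "finite B" and "convex C" and hull: "affine hull C = span B"
    and int_comb: "\<And>z :: 'a \<Rightarrow> int. (\<Sum>b\<in>B. of_int (z b) *\<^sub>R b) \<in> G"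
    and "G \<subseteq> span B"
  shows "\<exists>\<mu>\<ge>0. dilate_plus \<mu> C G = span B"
proof -
  have "C \<subseteq> span B" using hull hull_subset[of C affine] by simp
  have "C \<noteq> {}" using hull by (metis affine_hull_eq_empty span_zero empty_iff)
  then obtain c where "c \<in> rel_interior C"
    using rel_interior_eq_empty[OF \<open>convex C\<close>] by blast
  then obtain r where "r > 0" and ball_C: "cball c r \<inter> span B \<subseteq> C" and "c \<in> C"
    using mem_rel_interior_cball[of c C] hull by auto
  define R where "R = (\<Sum>b\<in>B. norm b)"
  \<comment> \<open>\<open>\<mu> C\<close> contains the ball of radius \<open>R\<close> about \<open>\<mu> c\<close> in \<open>span B\<close>,
    and \<open>R\<close> bounds the fundamental parallelepiped of \<open>B\<close>\<close>
  define \<mu> where "\<mu> = R / r + 1"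
  have "R \<ge> 0" unfolding R_def by (simp add: sum_nonneg)
  then have "\<mu> > 0" and "R / \<mu> \<le> r"
    using \<open>r > 0\<close> by (auto simp: \<mu>_def field_simps)
  have "span B \<subseteq> dilate_plus \<mu> C G"
  proof
    fix p assume "p \<in> span B"
    then have "p - \<mu> *\<^sub>R c \<in> span B"
      using \<open>c \<in> C\<close> \<open>C \<subseteq> span B\<close> by (auto intro: span_diff span_scale)
    then obtain y and z :: "'a \<Rightarrow> int"
      where yz: "p - \<mu> *\<^sub>R c = y + (\<Sum>b\<in>B. of_int (z b) *\<^sub>R b)"
        and "y \<in> span B" and "norm y \<le> R"
      using span_eq_bounded_plus_int_combination[OF \<open>finite B\<close>] unfolding R_def by blast
    define x where "x = c + (1 / \<mu>) *\<^sub>R y"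
    have "dist c x \<le> r"
      using \<open>norm y \<le> R\<close> \<open>R / \<mu> \<le> r\<close> \<open>\<mu> > 0\<close>
      by (simp add: x_def dist_norm) (meson divide_right_mono less_imp_le order_trans)
    moreover have "x \<in> span B"
      unfolding x_def using \<open>c \<in> C\<close> \<open>C \<subseteq> span B\<close> \<open>y \<in> span B\<close>
      by (auto intro: span_add span_scale)
    ultimately have "x \<in> C" using ball_C by auto
    moreover have "p = \<mu> *\<^sub>R x + (\<Sum>b\<in>B. of_int (z b) *\<^sub>R b)"
      using yz \<open>\<mu> > 0\<close> by (simp add: x_def scaleR_add_right algebra_simps)
    ultimately show "p \<in> dilate_plus \<mu> C G"
      unfolding dilate_plus_def using int_comb by blast
  qed
  moreover have "dilate_plus \<mu> C G \<subseteq> span B"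
    unfolding dilate_plus_def using \<open>C \<subseteq> span B\<close> \<open>G \<subseteq> span B\<close>
    by (auto intro: span_add span_scale)
  ultimately show ?thesis using \<open>\<mu> > 0\<close> by (intro exI[of _ \<mu>]) auto
qed

lemma int_combination_in_lattice_of:
  assumes "inj_on f {1..d}" and "I \<subseteq> {1..d}"
  shows "(\<Sum>b\<in>f ` I. of_int (z b) *\<^sub>R b) \<in> lattice_of f d"
proof -
  have "(\<Sum>b\<in>f ` I. of_int (z b) *\<^sub>R b) = (\<Sum>k\<in>I. of_int (z (f k)) *\<^sub>R f k)"
    using sum.reindex[OF inj_on_subset[OF assms]] by simp
  also have "\<dots> = (\<Sum>k\<in>{1..d}. if k \<in> I then of_int (z (f k)) *\<^sub>R f k else 0)"
    using assms(2) by (simp add: sum.If_cases Int_absorb1)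
  also have "\<dots> = (\<Sum>k\<in>{1..d}. of_int (if k \<in> I then z (f k) else 0) *\<^sub>R f k)"
    by (rule sum.cong) auto
  finally show ?thesis
    unfolding lattice_of_def by (intro CollectI exI[of _ "\<lambda>k. if k \<in> I then z (f k) else 0"]) simp
qed

lemma affine_hull_eq_subspace:
  assumes "subspace E" and "C \<subseteq> E" and "aff_dim C = dim E"
  shows "affine hull C = E"
  using aff_dim_eq_full_gen[OF assms(2)] assms(1,3)
  by (simp add: aff_dim_subspace affine_hull_eq subspace_imp_affine)

lemma affine_meets_span_of_subset:
  fixes U :: "'a::euclidean_space set"
  assumes "span F = UNIV" and "affine U" and "U \<noteq> {}"
    and dim_U: "aff_dim U + int i = DIM('a)"
  obtains F' where "F' \<subseteq> F" and "card F' = i" and "U \<inter> span F' \<noteq> {}"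
proof -
  obtain a where "a \<in> U" using \<open>U \<noteq> {}\<close> by auto
  define V where "V = (\<lambda>x. x - a) ` U"
  have "subspace V"
    unfolding V_def using affine_diffs_subspace_subtract[OF \<open>affine U\<close> \<open>a \<in> U\<close>] .
  have "dim V + i = DIM('a)"
    using aff_dim_eq_dim_subtract[OF hull_inc[OF \<open>a \<in> U\<close>]] dim_U unfolding V_def by simp
  obtain B where "B \<subseteq> V" and "independent B" and "V \<subseteq> span B" and "card B = dim V"
    using basis_exists by blast
  obtain B' where "B \<subseteq> B'" and "B' \<subseteq> B \<union> F" and "independent B'" and "B \<union> F \<subseteq> span B'"
    using maximal_independent_subset_extend[of B "B \<union> F"] \<open>independent B\<close> by blast
  have "span B' = UNIV"
    using \<open>span F = UNIV\<close> \<open>B \<union> F \<subseteq> span B'\<close>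
    by (metis le_sup_iff span_minimal subspace_span top.extremum_unique)
  then have "card B' = DIM('a)"
    using dim_eq_card_independent[OF \<open>independent B'\<close>] by (metis dim_UNIV dim_span)
  define F' where "F' = B' - B"
  have "finite B'" using independent_bound[OF \<open>independent B'\<close>] by blast
  then have "card F' = i"
    unfolding F'_def using card_Diff_subset[OF finite_subset[OF \<open>B \<subseteq> B'\<close>] \<open>B \<subseteq> B'\<close>]
      \<open>card B' = DIM('a)\<close> \<open>card B = dim V\<close> \<open>dim V + i = DIM('a)\<close> by simp
  have "- a \<in> span (B \<union> F')"
    using \<open>span B' = UNIV\<close> \<open>B \<subseteq> B'\<close> unfolding F'_def
    by (simp add: Un_Diff_cancel Un_absorb1)
  then obtain v w where "- a = v + w" and "v \<in> span B" and "w \<in> span F'"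
    unfolding span_Un by blast
  have "v \<in> V"
    using \<open>v \<in> span B\<close> \<open>B \<subseteq> V\<close> \<open>subspace V\<close> span_minimal by blast
  then obtain u where "u \<in> U" and "v = u - a" unfolding V_def by blast
  then have "u = - w" using \<open>- a = v + w\<close>
    by (metis add_diff_cancel_left' diff_add_cancel minus_add_cancel add.commute)
  then have "u \<in> span F'" using \<open>w \<in> span F'\<close> by (simp add: span_neg)
  moreover have "F' \<subseteq> F" using \<open>B' \<subseteq> B \<union> F\<close> unfolding F'_def by blast
  ultimately show thesis using that \<open>card F' = i\<close> \<open>u \<in> U\<close> by blast
qed

lemma affine_meets_coordinate_span:
  fixes U :: "'a::euclidean_space set"
  assumes "inj_on f {1..DIM('a)}" and "independent (f ` {1..DIM('a)})"
    and "affine U" and "U \<noteq> {}" and "aff_dim U = int (DIM('a) - i)" and "i \<le> DIM('a)"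
  obtains I where "I \<subseteq> {1..DIM('a)}" and "card I = i" and "U \<inter> span (f ` I) \<noteq> {}"
proof -
  have "span (f ` {1..DIM('a)}) = UNIV"
    using card_eq_dim[of "f ` {1..DIM('a)}" UNIV] card_image[OF assms(1)] assms(2)
    by (simp add: top.extremum_unique)
  then obtain F' where "F' \<subseteq> f ` {1..DIM('a)}" and "card F' = i" and "U \<inter> span F' \<noteq> {}"
    using affine_meets_span_of_subset assms(3-6) by (metis of_nat_add le_add_diff_inverse2)
  moreover obtain I where "I \<subseteq> {1..DIM('a)}" and "F' = f ` I"
    using \<open>F' \<subseteq> f ` {1..DIM('a)}\<close> by (auto simp: subset_image_iff)
  moreover have "card I = card F'"
    using \<open>F' = f ` I\<close> card_image inj_on_subset[OF assms(1) \<open>I \<subseteq> {1..DIM('a)}\<close>] by metis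
  ultimately show thesis using that by simp
qed

lemma exists_dilate_plus_covering_coordinate_section:
  fixes K :: "'a::euclidean_space set"
  assumes "convex K" and "inj_on f {1..d}" and "I \<subseteq> {1..d}" and "independent (f ` I)"
    and "aff_dim (K \<inter> span (f ` I)) = card I"
  shows "\<exists>\<mu>\<ge>0. dilate_plus \<mu> (K \<inter> span (f ` I)) (lattice_of f d \<inter> span (f ` I)) = span (f ` I)"
proof (rule exists_dilate_plus_covering_span)
  show "finite (f ` I)" using assms(3) finite_subset by blast
  show "convex (K \<inter> span (f ` I))"
    using assms(1) convex_Int subspace_imp_convex[OF subspace_span] by blast
  have "dim (span (f ` I)) = card I"
    using dim_eq_card_independent[OF assms(4)] card_image inj_on_subset[OF assms(2,3)] by simp
  then show "affine hull (K \<inter> span (f ` I)) = span (f ` I)"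
    using affine_hull_eq_subspace assms(5) by (metis Int_lower2 subspace_span)
  show "(\<Sum>b\<in>f ` I. of_int (z b) *\<^sub>R b) \<in> lattice_of f d \<inter> span (f ` I)" for z
    using int_combination_in_lattice_of[OF assms(2,3)] by (auto intro: span_sum span_scale span_base)
qed auto

lemma coordinate_span_subset_dilate_plus:
  fixes K :: "'a::euclidean_space set"
  assumes "convex K" and "inj_on f {1..d}" and "I \<subseteq> {1..d}" and "independent (f ` I)"
    and "aff_dim (K \<inter> span (f ` I)) = card I"
    and "covering_radius_in (span (f ` I)) (K \<inter> span (f ` I)) (lattice_of f d \<inter> span (f ` I)) < \<mu>"
  shows "span (f ` I) \<subseteq> dilate_plus \<mu> K (lattice_of f d)"
proof -
  have "K \<inter> span (f ` I) \<noteq> {}"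
    using assms(5) by (auto simp: aff_dim_empty)
  then have "span (f ` I) \<subseteq> dilate_plus \<mu> (K \<inter> span (f ` I)) (lattice_of f d \<inter> span (f ` I))"
    using exists_dilate_plus_covering_coordinate_section[OF assms(1-5)] assms(1,6)
    by (intro subset_dilate_plus_above_covering_radius_in) (auto intro: convex_Int subspace_imp_convex)
  also have "\<dots> \<subseteq> dilate_plus \<mu> K (lattice_of f d)"
    by (rule dilate_plus_mono) auto
  finally show ?thesis .
qed

lemma covering_minimum_le:
  fixes K :: "'a::euclidean_space set"
  assumes "0 \<le> M"
    and "\<And>\<mu> U. M < \<mu> \<Longrightarrow> affine U \<Longrightarrow> U \<noteq> {} \<Longrightarrow> aff_dim U = int (DIM('a) - i) \<Longrightarrow>
           dilate_plus \<mu> K L \<inter> U \<noteq> {}"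
  shows "covering_minimum i K L \<le> M"
  unfolding covering_minimum_def
proof (rule field_le_epsilon)
  fix e :: real assume "0 < e"
  then show "Inf {\<mu>. \<mu> \<ge> 0 \<and> (\<forall>U. affine U \<and> U \<noteq> {} \<and> aff_dim U = int (DIM('a) - i) \<longrightarrow>
                dilate_plus \<mu> K L \<inter> U \<noteq> {})} \<le> M + e"
    using assms by (intro cInf_lower) (auto simp: bdd_below_def)
qed

theorem theorem1p3:
  fixes K :: "'a::euclidean_space set" and f :: "nat \<Rightarrow> 'a" and i :: nat
  assumes "convex_body K"
    and "inj_on f {1..DIM('a)}" and "independent (f ` {1..DIM('a)})"
    and "1 \<le> i" and "i \<le> DIM('a)"
    and "\<forall>I. I \<subseteq> {1..DIM('a)} \<and> card I = i \<longrightarrow>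
           aff_dim (K \<inter> span (f ` I)) = int i"
  shows "covering_minimum i K (lattice_of f DIM('a)) \<le>
    Max {covering_radius_in (span (f ` I)) (K \<inter> span (f ` I))
           (lattice_of f DIM('a) \<inter> span (f ` I)) | I. I \<subseteq> {1..DIM('a)} \<and> card I = i}"
proof -
  let ?\<Lambda> = "lattice_of f DIM('a)"
  let ?cr = "\<lambda>I. covering_radius_in (span (f ` I)) (K \<inter> span (f ` I)) (?\<Lambda> \<inter> span (f ` I))"
  let ?M = "Max {?cr I | I. I \<subseteq> {1..DIM('a)} \<and> card I = i}"
  have "convex K" using assms(1) unfolding convex_body_def by blast
  have indep: "independent (f ` I)" and dim_section: "aff_dim (K \<inter> span (f ` I)) = card I"
    if "I \<subseteq> {1..DIM('a)}" and "card I = i" for I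
    using independent_mono[OF assms(3) image_mono[OF that(1)]] assms(6) that by auto
  have "finite {?cr I | I. I \<subseteq> {1..DIM('a)} \<and> card I = i}"
    by (rule finite_subset[of _ "?cr ` Pow {1..DIM('a)}"]) auto
  then have cr_le_M: "?cr I \<le> ?M" if "I \<subseteq> {1..DIM('a)}" and "card I = i" for I
    using that by (intro Max_ge) auto
  have "{1..i} \<subseteq> {1..DIM('a)}" and "card {1..i} = i" using assms(5) by auto
  then have "0 \<le> ?cr {1..i}"
    using exists_dilate_plus_covering_coordinate_section[OF \<open>convex K\<close> assms(2)] indep dim_section
    by (simp add: covering_radius_in_nonneg)
  then have "0 \<le> ?M" using cr_le_M[OF \<open>{1..i} \<subseteq> {1..DIM('a)}\<close> \<open>card {1..i} = i\<close>] by simp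
  then show ?thesis
  proof (rule covering_minimum_le)
    fix \<mu> and U :: "'a set"
    assume "?M < \<mu>" and U: "affine U" "U \<noteq> {}" "aff_dim U = int (DIM('a) - i)"
    then obtain I where I: "I \<subseteq> {1..DIM('a)}" "card I = i" and "U \<inter> span (f ` I) \<noteq> {}"
      using affine_meets_coordinate_span[OF assms(2,3) U assms(5)] by blast
    moreover have "span (f ` I) \<subseteq> dilate_plus \<mu> K ?\<Lambda>"
      using coordinate_span_subset_dilate_plus[OF \<open>convex K\<close> assms(2) I(1) indep[OF I] dim_section[OF I]]
        cr_le_M[OF I] \<open>?M < \<mu>\<close> by simp
    ultimately show "dilate_plus \<mu> K ?\<Lambda> \<inter> U \<noteq> {}" by blast
  qed
qed

end
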